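(* Let $U_1,\dots,U_d$ be finite sets of points in $\mathbb{R}^d$, each of odd cardinality, whose union is in general position (no $d+1$ of the points lie on a common affine hyperplane). Then there exist points $p_1\in U_1,\dots,p_d\in U_d$ such that the hyperplane $h$ spanned by $p_1,\dots,p_d$ halves each $U_i$, i.e. each of the two open halfspaces determined by $h$ contains exactly $(|U_i|-1)/2$ points of $U_i$, for every $i=1,\dots,d$. *)

theory Defs
  imports "HOL-Analysis.Analysis"
begin

text \<open>A finite point set in R^d (d = CARD('n)) is in general position if
  no d+1 of its points lie on a common affine hyperplane; as usual this is
  taken to mean that every subset of at most d+1 points is affinely independent.\<close>
definition general_position :: "(real ^ 'n) set \<Rightarrow> bool" where
  "general_position S \<longleftrightarrow>
     (\<forall>T. T \<subseteq> S \<and> card T \<le> CARD('n) + 1 \<longrightarrow> \<not> affine_dependent T)"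

end

theory Submission
  imports Defs "HOL-Homology.Homology"
begin

(* For every \<epsilon> > 0 the map sending (a, b) on the unit sphere of R^d \<times> R to the vector
   of sums \<Sum>x\<in>U_i. clip ((a \<bullet> x - b) / \<epsilon>) is continuous and odd, so by Borsuk-Ulam it has a
   zero.  Letting \<epsilon> \<rightarrow> 0 along a convergent subsequence gives a hyperplane a \<bullet> x = b and weights
   \<phi> x \<in> [-1, 1] that equal \<plusminus>1 on the two open sides and sum to 0 over each U_i.  As |U_i| is odd,
   every U_i meets the hyperplane; by general position the hyperplane contains at most d points,
   hence exactly one point p_i of each U_i, and then the two sides of U_i have equal size.
   Borsuk-Ulam is derived from the mod 2 degree: an odd self-map of the k-sphere has odd degree, by
   induction on k via Borsuk_odd_mapping_degree_step, after approximating the map by a smooth one,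
   rotating a missed point to a pole and deforming the map so that it preserves the equator. *)

section \<open>Unit spheres in a flag of subspaces\<close>

locale orthonormal_seq =
  fixes b :: "nat \<Rightarrow> 'a::euclidean_space" and D :: nat
  assumes orthonormal: "\<And>i j. i \<le> D \<Longrightarrow> j \<le> D \<Longrightarrow> b i \<bullet> b j = (if i = j then 1 else 0)"
begin

definition proj :: "nat \<Rightarrow> 'a \<Rightarrow> 'a" where
  "proj k x = (\<Sum>i\<le>k. (x \<bullet> b i) *\<^sub>R b i)"

definition span_upto :: "nat \<Rightarrow> 'a set" where
  "span_upto k = span (b ` {..k})"

definition sphere_upto :: "nat \<Rightarrow> 'a set" where
  "sphere_upto k = sphere 0 1 \<inter> span_upto k"

lemma subspace_span_upto [simp]: "subspace (span_upto k)"
  by (simp add: span_upto_def)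

lemma span_upto_mono: "j \<le> k \<Longrightarrow> span_upto j \<subseteq> span_upto k"
  unfolding span_upto_def by (rule span_mono) auto

lemma sphere_upto_mono: "j \<le> k \<Longrightarrow> sphere_upto j \<subseteq> sphere_upto k"
  using span_upto_mono by (auto simp: sphere_upto_def)

lemma sphere_upto_minus: "x \<in> sphere_upto k \<Longrightarrow> - x \<in> sphere_upto k"
  by (simp add: sphere_upto_def subspace_neg)

lemma sgn_in_sphere_upto: "y \<in> span_upto k \<Longrightarrow> y \<noteq> 0 \<Longrightarrow> sgn y \<in> sphere_upto k"
  by (simp add: sphere_upto_def sgn_div_norm norm_sgn subspace_scale)

lemma compact_sphere_upto: "compact (sphere_upto k)"
  unfolding sphere_upto_def span_upto_def by (rule compact_Int_closed[OF compact_sphere closed_span])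

lemma norm_b: "i \<le> D \<Longrightarrow> norm (b i) = 1"
  using orthonormal[of i i] by (simp add: norm_eq_sqrt_inner)

lemma b_in_span_upto: "i \<le> k \<Longrightarrow> b i \<in> span_upto k"
  by (simp add: span_upto_def span_base)

lemma b_in_sphere_upto: "k \<le> D \<Longrightarrow> b k \<in> sphere_upto k"
  by (simp add: sphere_upto_def norm_b b_in_span_upto)

lemma linear_proj: "linear (proj k)"
  by (rule linearI) (simp_all add: proj_def inner_add_left scaleR_add_left sum.distrib scaleR_sum_right)

lemma proj_in_span_upto: "proj k x \<in> span_upto k"
  unfolding proj_def span_upto_def by (intro span_sum span_mul span_base) auto

lemma proj_inner_b:
  assumes "j \<le> D" "k \<le> D"
  shows "proj k x \<bullet> b j = (if j \<le> k then x \<bullet> b j else 0)"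
proof -
  have "proj k x \<bullet> b j = (\<Sum>i\<le>k. (x \<bullet> b i) * (b i \<bullet> b j))"
    by (simp add: proj_def inner_sum_left)
  also have "\<dots> = (\<Sum>i\<le>k. if i = j then x \<bullet> b j else 0)"
    by (rule sum.cong) (use assms in \<open>auto simp: orthonormal\<close>)
  finally show ?thesis by (simp add: sum.delta)
qed

lemma proj_b: "j \<le> k \<Longrightarrow> k \<le> D \<Longrightarrow> proj k (b j) = b j"
proof -
  assume jk: "j \<le> k" "k \<le> D"
  have "proj k (b j) = (\<Sum>i\<le>k. if i = j then b j else 0)"
    unfolding proj_def by (rule sum.cong) (use jk in \<open>auto simp: orthonormal\<close>)
  then show ?thesis using jk by (simp add: sum.delta)
qed

lemma proj_eq_self: "k \<le> D \<Longrightarrow> x \<in> span_upto k \<Longrightarrow> proj k x = x"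
  using linear_eq_on_span[OF linear_proj linear_id, of "b ` {..k}" k x] proj_b
  by (auto simp: span_upto_def)

lemma span_upto_inner_b: "k \<le> D \<Longrightarrow> x \<in> span_upto k \<Longrightarrow> k < j \<Longrightarrow> j \<le> D \<Longrightarrow> x \<bullet> b j = 0"
  using proj_inner_b[of j k x] proj_eq_self by auto

lemma power2_norm_span_upto:
  assumes "k \<le> D" "x \<in> span_upto k"
  shows "(norm x)\<^sup>2 = (\<Sum>i\<le>k. (x \<bullet> b i)\<^sup>2)"
proof -
  have "(norm x)\<^sup>2 = proj k x \<bullet> x"
    using proj_eq_self[OF assms] by (simp add: power2_norm_eq_inner)
  also have "\<dots> = (\<Sum>i\<le>k. (x \<bullet> b i) * (b i \<bullet> x))"
    by (simp add: proj_def inner_sum_left)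
  finally show ?thesis
    by (simp add: power2_eq_square inner_commute)
qed

lemma span_upto_SucI:
  assumes "Suc k \<le> D" "x \<in> span_upto (Suc k)" "x \<bullet> b (Suc k) = 0"
  shows "x \<in> span_upto k"
proof -
  have "proj k x = proj (Suc k) x - (x \<bullet> b (Suc k)) *\<^sub>R b (Suc k)"
    by (simp add: proj_def)
  then show ?thesis using assms proj_eq_self[of "Suc k" x] proj_in_span_upto[of k x] by simp
qed

lemma sphere_upto_0: "x \<in> sphere_upto 0 \<Longrightarrow> x = b 0 \<or> x = - b 0"
proof -
  assume x: "x \<in> sphere_upto 0"
  define c where "c = x \<bullet> b 0"
  have xc: "x = c *\<^sub>R b 0"
    using x proj_eq_self[of 0 x] by (simp add: proj_def sphere_upto_def c_def)
  then have "\<bar>c\<bar> = 1"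
    using x norm_b[of 0] by (simp add: sphere_upto_def)
  then have "c = 1 \<or> c = -1" by linarith
  then show ?thesis using xc by auto
qed

lemma dim_span_upto: "k \<le> D \<Longrightarrow> dim (span_upto k) = Suc k"
proof -
  assume k: "k \<le> D"
  have "inj_on b {..k}"
  proof (rule inj_onI)
    fix i j assume "i \<in> {..k}" "j \<in> {..k}" "b i = b j"
    then show "i = j" using k orthonormal[of i j] orthonormal[of i i] by (auto split: if_splits)
  qed
  moreover have "independent (b ` {..k})"
  proof (rule pairwise_orthogonal_independent)
    show "pairwise orthogonal (b ` {..k})"
      using k orthonormal by (auto simp: pairwise_def orthogonal_def)
    show "0 \<notin> b ` {..k}"
      using k norm_b by (metis atMost_iff imageE le_trans norm_zero zero_neq_one)
  qed
  ultimately show ?thesis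
    by (simp add: span_upto_def dim_eq_card_independent card_image)
qed

(* Brouwer_degree2 is defined for self-maps of the spheres nsphere k in nat \<Rightarrow> real; coords and
   of_coords identify them with sphere_upto k. *)
definition coords :: "'a \<Rightarrow> nat \<Rightarrow> real" where
  "coords x = (\<lambda>i. if i \<le> D then x \<bullet> b i else 0)"

definition of_coords :: "(nat \<Rightarrow> real) \<Rightarrow> 'a" where
  "of_coords z = (\<Sum>i\<le>D. z i *\<^sub>R b i)"

definition nsphere_map :: "('a \<Rightarrow> 'a) \<Rightarrow> (nat \<Rightarrow> real) \<Rightarrow> nat \<Rightarrow> real" where
  "nsphere_map g = coords \<circ> g \<circ> of_coords"

abbreviation deg2 :: "nat \<Rightarrow> ('a \<Rightarrow> 'a) \<Rightarrow> int" where
  "deg2 k g \<equiv> Brouwer_degree2 k (nsphere_map g)"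

lemma of_coords_inner_b: "j \<le> D \<Longrightarrow> of_coords z \<bullet> b j = z j"
proof -
  assume j: "j \<le> D"
  have "of_coords z \<bullet> b j = (\<Sum>i\<le>D. if i = j then z j else 0)"
    unfolding of_coords_def inner_sum_left by (rule sum.cong) (use j in \<open>auto simp: orthonormal\<close>)
  then show ?thesis using j by simp
qed

lemma of_coords_minus: "of_coords (\<lambda>i. - z i) = - of_coords z"
  by (simp add: of_coords_def sum_negf)

lemma of_coords_in_sphere_upto:
  assumes k: "k \<le> D" and z: "z \<in> topspace (nsphere k)"
  shows "of_coords z \<in> sphere_upto k"
proof -
  have z1: "(\<Sum>i\<le>k. (z i)\<^sup>2) = 1" and z0: "\<And>i. k < i \<Longrightarrow> z i = 0"
    using z by (auto simp: nsphere)
  have span: "of_coords z \<in> span_upto k"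
    unfolding of_coords_def
  proof (intro subspace_sum[OF subspace_span_upto])
    fix i assume "i \<in> {..D}"
    then show "z i *\<^sub>R b i \<in> span_upto k"
      using z0[of i] by (cases "i \<le> k") (auto simp: subspace_scale b_in_span_upto subspace_0)
  qed
  have "(norm (of_coords z))\<^sup>2 = (\<Sum>i\<le>k. (z i)\<^sup>2)"
    using k by (simp add: power2_norm_span_upto[OF k span] of_coords_inner_b)
  then have "norm (of_coords z) = 1"
    using z1 norm_ge_zero[of "of_coords z"] by (auto simp: power2_eq_1_iff)
  then show ?thesis using span by (simp add: sphere_upto_def)
qed

lemma coords_of_coords: "k \<le> D \<Longrightarrow> z \<in> topspace (nsphere k) \<Longrightarrow> coords (of_coords z) = z"
  by (auto simp: coords_def of_coords_inner_b nsphere fun_eq_iff)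

lemma of_coords_coords: "x \<in> span_upto D \<Longrightarrow> of_coords (coords x) = x"
  using proj_eq_self[of D x] by (simp add: of_coords_def coords_def proj_def)

lemma coords_in_nsphere:
  assumes k: "k \<le> D" and x: "x \<in> sphere_upto k"
  shows "coords x \<in> topspace (nsphere k)"
proof -
  have "(\<Sum>i\<le>k. (coords x i)\<^sup>2) = (norm x)\<^sup>2"
    using x k power2_norm_span_upto[OF k, of x] by (simp add: coords_def sphere_upto_def)
  moreover have "coords x i = 0" if "k < i" for i
    using x k that span_upto_inner_b by (auto simp: coords_def sphere_upto_def)
  ultimately show ?thesis using x by (simp add: nsphere sphere_upto_def)
qed

lemma continuous_map_of_coords:
  "k \<le> D \<Longrightarrow> continuous_map (nsphere k) (top_of_set (sphere_upto k)) of_coords"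
proof (rule continuous_map_into_subtopology)
  have "continuous_map (powertop_real UNIV) euclidean of_coords"
    using continuous_map_span_sum[of "{..D}" "\<lambda>i. b i"]
    by (auto simp: of_coords_def euclidean_product_topology continuous_map_in_subtopology)
  then show "continuous_map (nsphere k) euclidean of_coords"
    by (simp add: nsphere continuous_map_from_subtopology)
qed (use of_coords_in_sphere_upto in auto)

lemma continuous_map_coords:
  assumes "k \<le> D"
  shows "continuous_map (top_of_set (sphere_upto k)) (nsphere k) coords"
proof -
  have "continuous_map (top_of_set (sphere_upto k)) euclideanreal (\<lambda>x. coords x i)" for i
    by (cases "i \<le> D") (auto simp: coords_def continuous_map_iff_continuous intro!: continuous_intros)
  then show ?thesis
    using coords_in_nsphere[OF assms]
    by (auto simp: nsphere continuous_map_in_subtopology continuous_map_componentwise_UNIV)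
qed

definition sphere_map :: "nat \<Rightarrow> ('a \<Rightarrow> 'a) \<Rightarrow> bool" where
  "sphere_map k g \<longleftrightarrow> continuous_on (sphere_upto k) g \<and> g \<in> sphere_upto k \<rightarrow> sphere_upto k"

definition odd_sphere_map :: "nat \<Rightarrow> ('a \<Rightarrow> 'a) \<Rightarrow> bool" where
  "odd_sphere_map k g \<longleftrightarrow> sphere_map k g \<and> (\<forall>x\<in>sphere_upto k. g (- x) = - g x)"

lemma odd_sphere_map_sgn:
  assumes "continuous_on (sphere_upto k) u" "\<And>x. x \<in> sphere_upto k \<Longrightarrow> u (- x) = - u x"
    and "\<And>x. x \<in> sphere_upto k \<Longrightarrow> u x \<in> span_upto k" "\<And>x. x \<in> sphere_upto k \<Longrightarrow> u x \<noteq> 0"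
  shows "odd_sphere_map k (\<lambda>x. sgn (u x))"
  using assms by (auto simp: odd_sphere_map_def sphere_map_def sgn_minus
      intro!: sgn_in_sphere_upto continuous_on_sgn)

lemma continuous_map_nsphere_map:
  assumes "k \<le> D" "sphere_map k g"
  shows "continuous_map (nsphere k) (nsphere k) (nsphere_map g)"
proof -
  have "continuous_map (top_of_set (sphere_upto k)) (top_of_set (sphere_upto k)) g"
    using assms(2) by (simp add: sphere_map_def continuous_map_in_subtopology image_subset_iff_funcset)
  then show ?thesis
    unfolding nsphere_map_def
    using continuous_map_of_coords[OF assms(1)] continuous_map_coords[OF assms(1)]
    by (metis continuous_map_compose)
qed

lemma deg2_homotopic:
  assumes "k \<le> D" "homotopic_with_canon (\<lambda>_. True) (sphere_upto k) (sphere_upto k) g h"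
  shows "deg2 k g = deg2 k h"
proof (rule Brouwer_degree2_homotopic)
  have "homotopic_with (\<lambda>_. True) (nsphere k) (top_of_set (sphere_upto k)) (g \<circ> of_coords) (h \<circ> of_coords)"
    by (rule homotopic_with_compose_continuous_map_right[OF assms(2) continuous_map_of_coords[OF assms(1)]]) auto
  then have "homotopic_with (\<lambda>_. True) (nsphere k) (nsphere k) (coords \<circ> (g \<circ> of_coords)) (coords \<circ> (h \<circ> of_coords))"
    by (rule homotopic_with_compose_continuous_map_left[OF _ continuous_map_coords[OF assms(1)]]) auto
  then show "homotopic_with (\<lambda>x. True) (nsphere k) (nsphere k) (nsphere_map g) (nsphere_map h)"
    by (simp add: nsphere_map_def o_assoc)
qed

lemma deg2_compose:
  assumes "k \<le> D" "sphere_map k g" "sphere_map k h"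
  shows "deg2 k (g \<circ> h) = deg2 k g * deg2 k h"
proof -
  have "deg2 k (g \<circ> h) = Brouwer_degree2 k (nsphere_map g \<circ> nsphere_map h)"
  proof (rule Brouwer_degree2_eq)
    fix z assume "z \<in> topspace (nsphere k)"
    then have "h (of_coords z) \<in> sphere_upto k"
      using assms of_coords_in_sphere_upto by (auto simp: sphere_map_def)
    then show "nsphere_map (g \<circ> h) z = (nsphere_map g \<circ> nsphere_map h) z"
      using span_upto_mono[OF assms(1)] of_coords_coords
      by (auto simp: nsphere_map_def sphere_upto_def)
  qed
  then show ?thesis
    using Brouwer_degree2_compose continuous_map_nsphere_map assms by metis
qed

lemma deg2_id_on:
  assumes "k \<le> D" "\<And>x. x \<in> sphere_upto k \<Longrightarrow> g x = x"
  shows "deg2 k g = 1"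
proof -
  have "deg2 k g = Brouwer_degree2 k id"
    by (rule Brouwer_degree2_eq)
       (simp add: nsphere_map_def assms of_coords_in_sphere_upto coords_of_coords[OF assms(1)])
  then show ?thesis by simp
qed

lemma odd_deg2_involution:
  assumes "k \<le> D" "sphere_map k g" "\<And>x. x \<in> sphere_upto k \<Longrightarrow> g (g x) = x"
  shows "odd (deg2 k g)"
proof -
  have "deg2 k g * deg2 k g = 1"
    using deg2_compose[OF assms(1,2,2)] deg2_id_on[OF assms(1), of "g \<circ> g"] assms(3) by simp
  then show ?thesis
    by (metis dvd_mult_cancel_left even_mult_iff odd_one)
qed

end

lemma zero_notin_closed_segment_sphere:
  fixes a c :: "'a::real_normed_vector"
  assumes "norm a = 1" "norm c = 1" "a + c \<noteq> 0"
  shows "0 \<notin> closed_segment a c"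
proof
  assume "0 \<in> closed_segment a c"
  then obtain u where u: "0 \<le> u" "u \<le> 1" "(1 - u) *\<^sub>R a = - (u *\<^sub>R c)"
    by (auto simp: in_segment eq_neg_iff_add_eq_0)
  then have "norm ((1 - u) *\<^sub>R a) = norm (u *\<^sub>R c)" by (metis norm_minus_cancel)
  then have "\<bar>1 - u\<bar> = \<bar>u\<bar>" using assms by simp
  then have "1 - u = u" using u by (simp add: abs_of_nonneg)
  then have "u = 1/2" by simp
  with u(3) have "(1/2) *\<^sub>R a = (1/2) *\<^sub>R (- c)" by simp
  then have "a = - c" by (rule scaleR_left_imp_eq[rotated]) simp
  then show False using assms by simp
qed

lemma nonantipodal_homotopic:
  fixes f g :: "'b::topological_space \<Rightarrow> 'a::real_normed_vector"
  assumes W: "subspace W" and "continuous_on X f" "continuous_on X g"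
    and fim: "f \<in> X \<rightarrow> sphere 0 1 \<inter> W" and gim: "g \<in> X \<rightarrow> sphere 0 1 \<inter> W"
    and "\<And>x. x \<in> X \<Longrightarrow> f x + g x \<noteq> 0"
  shows "homotopic_with_canon (\<lambda>_. True) X (sphere 0 1 \<inter> W) f g"
proof -
  have "homotopic_with_canon (\<lambda>_. True) X (W - {0}) f g"
  proof (rule homotopic_with_linear)
    fix x assume x: "x \<in> X"
    have "closed_segment (f x) (g x) \<subseteq> W"
      using fim gim x subspace_imp_convex[OF W] by (intro closed_segment_subset) auto
    moreover have "0 \<notin> closed_segment (f x) (g x)"
      using fim gim x assms(6) by (intro zero_notin_closed_segment_sphere) auto
    ultimately show "closed_segment (f x) (g x) \<subseteq> W - {0}" by auto
  qed (use assms in auto)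
  moreover have "continuous_on (W - {0}) sgn"
    using continuous_on_sgn[OF continuous_on_id, of "W - {0}"] by (simp add: id_def)
  moreover have "sgn \<in> W - {0} \<rightarrow> sphere 0 1 \<inter> W"
    using W by (auto simp: norm_sgn sgn_div_norm subspace_scale)
  ultimately have "homotopic_with_canon (\<lambda>_. True) X (sphere 0 1 \<inter> W) (sgn \<circ> f) (sgn \<circ> g)"
    by (intro homotopic_with_compose_continuous_left) auto
  then show ?thesis
    by (rule homotopic_with_eq) (use fim gim in \<open>force simp: sgn_div_norm Pi_iff\<close>)+
qed

lemma differentiable_on_sgn_polynomial_function:
  fixes q :: "'a::euclidean_space \<Rightarrow> 'b::euclidean_space"
  assumes "polynomial_function q" "\<And>x. x \<in> S \<Longrightarrow> q x \<noteq> 0"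
  shows "(\<lambda>x. sgn (q x)) differentiable_on S"
  unfolding differentiable_on_def sgn_div_norm
proof
  fix x assume "x \<in> S"
  then have "q x \<noteq> 0" by (rule assms(2))
  have q: "q differentiable at x within S"
    by (rule differentiable_at_polynomial_function[OF assms(1)])
  have "(\<lambda>x. norm (q x)) differentiable at x within S"
    by (rule differentiable_compose[OF differentiable_norm_at[OF \<open>q x \<noteq> 0\<close>] q])
  then have "(\<lambda>x. inverse (norm (q x))) differentiable at x within S"
    by (rule differentiable_inverse) (simp add: \<open>q x \<noteq> 0\<close>)
  then show "(\<lambda>x. q x /\<^sub>R norm (q x)) differentiable at x within S"
    by (rule differentiable_scaleR[OF _ q])
qed

(* The reflection in the hyperplane orthogonal to u; for u = 0 it is the identity, since sgn 0 = 0. *)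
definition reflect :: "'a::real_inner \<Rightarrow> 'a \<Rightarrow> 'a" where
  "reflect u x = x - (2 * (x \<bullet> sgn u)) *\<^sub>R sgn u"

lemma inner_sgn_self: "sgn u \<bullet> sgn u = (if u = 0 then 0 else 1)"
  for u :: "'a::real_inner"
  by (simp add: power2_norm_eq_inner[symmetric] norm_sgn)

lemma reflect_reflect [simp]: "reflect u (reflect u x) = x"
  by (cases "u = 0") (simp_all add: reflect_def inner_diff_left inner_sgn_self algebra_simps flip: scaleR_add_left)

lemma norm_reflect [simp]: "norm (reflect u x) = norm x"
proof -
  have "(norm (reflect u x))\<^sup>2 = (norm x)\<^sup>2"
    by (cases "u = 0")
      (simp_all add: reflect_def power2_norm_eq_inner inner_diff_left inner_diff_right inner_sgn_self
        algebra_simps inner_commute[of "sgn u"])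
  then show ?thesis by (simp add: power2_eq_iff_nonneg)
qed

lemma reflect_minus: "reflect u (- x) = - reflect u x"
  by (simp add: reflect_def)

lemma reflect_diff_eq:
  assumes "norm v = norm e"
  shows "reflect (v - e) v = e"
proof (cases "v = e")
  case False
  then have n: "norm (v - e) \<noteq> 0" by simp
  have "v \<bullet> v = e \<bullet> e" using assms by (simp add: dot_square_norm)
  then have "(norm (v - e))\<^sup>2 = 2 * (v \<bullet> (v - e))"
    by (simp add: power2_norm_eq_inner inner_diff_left inner_diff_right inner_commute[of e v])
  then have "norm (v - e) * norm (v - e) = 2 * (v \<bullet> (v - e))"
    by (simp add: power2_eq_square)
  moreover have "v \<bullet> sgn (v - e) = (v \<bullet> (v - e)) / norm (v - e)"
    by (simp only: sgn_div_norm inner_scaleR_right) (simp add: divide_inverse mult.commute)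
  ultimately have "norm (v - e) * (2 * (v \<bullet> sgn (v - e)) - norm (v - e)) = 0"
    using n by (simp add: field_simps)
  then have "2 * (v \<bullet> sgn (v - e)) = norm (v - e)"
    using n by simp
  then have "(2 * (v \<bullet> sgn (v - e))) *\<^sub>R sgn (v - e) = v - e"
    using n by (simp add: sgn_div_norm)
  then show ?thesis by (simp add: reflect_def)
qed (simp add: reflect_def)

lemma continuous_on_reflect: "continuous_on S (reflect u)"
  unfolding reflect_def by (intro continuous_intros)

lemma reflect_in_subspace: "subspace W \<Longrightarrow> u \<in> W \<Longrightarrow> x \<in> W \<Longrightarrow> reflect u x \<in> W"
  unfolding reflect_def sgn_div_norm by (intro subspace_diff subspace_scale)

lemma shrunk_component_eq_0:
  fixes y e :: "'a::real_inner"
  assumes "y - (t * (y \<bullet> e)) *\<^sub>R e = 0" "norm y = 1" "norm e = 1"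
  shows "t = 1 \<and> (y = e \<or> y = - e)"
proof -
  define c where "c = t * (y \<bullet> e)"
  have y: "y = c *\<^sub>R e" using assms(1) by (simp add: c_def)
  then have "\<bar>c\<bar> = 1" using assms(2,3) by simp
  moreover have "y \<bullet> e = c" using y assms(3) by (simp add: dot_square_norm)
  then have "c = t * c" by (simp add: c_def)
  ultimately have "t = 1" by (cases "c = 0") auto
  moreover have "c = 1 \<or> c = -1" using \<open>\<bar>c\<bar> = 1\<close> by (cases "c \<ge> 0") auto
  ultimately show ?thesis using y by auto
qed

lemma sgn_shrunk_component_nonantipodal:
  fixes y e :: "'a::real_inner"
  assumes "norm y = 1" "norm e = 1" "0 \<le> t" "t \<le> 1"
  shows "sgn (y - (t * (y \<bullet> e)) *\<^sub>R e) + y \<noteq> 0"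
proof
  define u where "u = y - (t * (y \<bullet> e)) *\<^sub>R e"
  assume "sgn u + y = 0"
  then have "u \<noteq> 0" using assms(1) by auto
  have "u = norm u *\<^sub>R sgn u" by (simp add: sgn_div_norm \<open>u \<noteq> 0\<close>)
  also have "\<dots> = - norm u *\<^sub>R y" using \<open>sgn u + y = 0\<close> by (simp add: add_eq_0_iff2)
  finally have "(1 + norm u) *\<^sub>R y = (t * (y \<bullet> e)) *\<^sub>R e"
    by (simp add: u_def algebra_simps)
  then have "(1 + norm u) * (y \<bullet> y) = t * (y \<bullet> e)\<^sup>2"
    by (metis inner_scaleR_left inner_commute power2_eq_square mult.assoc)
  moreover have "(y \<bullet> e)\<^sup>2 \<le> 1"
    using Cauchy_Schwarz_ineq[of y e] assms by (simp add: dot_square_norm)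
  ultimately have "1 + norm u \<le> 1"
    using assms by (simp add: dot_square_norm) (metis mult_le_one zero_le_power2)
  then show False using \<open>u \<noteq> 0\<close> by simp
qed

section \<open>Odd maps have odd degree: the Borsuk--Ulam theorem\<close>

context orthonormal_seq
begin

lemma sphere_map_compose: "sphere_map k g \<Longrightarrow> sphere_map k h \<Longrightarrow> sphere_map k (g \<circ> h)"
  unfolding sphere_map_def o_def
  by (auto intro: continuous_on_compose2[of "sphere_upto k" g] simp: image_subset_iff_funcset)

lemma deg2_nonantipodal:
  assumes "k \<le> D" "sphere_map k g" "sphere_map k h"
    and "\<And>x. x \<in> sphere_upto k \<Longrightarrow> g x + h x \<noteq> 0"
  shows "deg2 k g = deg2 k h"
  using assms nonantipodal_homotopic[of "span_upto k" "sphere_upto k" g h]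
  by (intro deg2_homotopic) (auto simp: sphere_map_def sphere_upto_def)

lemma odd_polynomial_approximation:
  assumes gc: "continuous_on (sphere_upto k) g" and gim: "g ` sphere_upto k \<subseteq> span_upto k"
    and godd: "\<And>x. x \<in> sphere_upto k \<Longrightarrow> g (- x) = - g x" and "e > 0"
  obtains q where "polynomial_function q" "\<And>x. q (- x) = - q x" "q ` sphere_upto k \<subseteq> span_upto k"
    "\<And>x. x \<in> sphere_upto k \<Longrightarrow> norm (q x - g x) < e"
proof -
  obtain p where p: "polynomial_function p" "p ` sphere_upto k \<subseteq> span_upto k"
    "\<And>x. x \<in> sphere_upto k \<Longrightarrow> norm (g x - p x) < e"
    using Stone_Weierstrass_polynomial_function_subspace[OF compact_sphere_upto gc \<open>e > 0\<close> _ gim]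
    by auto
  define q where "q x = (1/2) *\<^sub>R (p x - p (- x))" for x
  have "polynomial_function q"
    unfolding q_def
    by (intro polynomial_function_cmul polynomial_function_diff p(1)
        polynomial_function_compose[OF polynomial_function_minus[OF polynomial_function_id] p(1), unfolded o_def])
  moreover have "q (- x) = - q x" for x by (simp add: q_def algebra_simps)
  moreover have "q ` sphere_upto k \<subseteq> span_upto k"
    using p(2) sphere_upto_minus unfolding q_def by (auto intro!: subspace_scale subspace_diff)
  moreover have "norm (q x - g x) < e" if x: "x \<in> sphere_upto k" for x
  proof -
    have "q x - g x = (1/2) *\<^sub>R ((p x - g x) - (p (- x) - g (- x)))"
      using godd[OF x] by (simp add: q_def algebra_simps flip: scaleR_add_left)
    also have "norm \<dots> \<le> (1/2) * (norm (p x - g x) + norm (p (- x) - g (- x)))"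
      by (simp add: norm_triangle_ineq4)
    also have "\<dots> < (1/2) * (e + e)"
      using p(3)[OF x] p(3)[OF sphere_upto_minus[OF x]] by (simp add: norm_minus_commute)
    finally show ?thesis by simp
  qed
  ultimately show ?thesis using that by blast
qed

(* The approximation is smooth, so the image of the lower-dimensional sphere misses a point
   (spheremap_lemma1, a Sard-type argument). *)
lemma odd_approximation_missing_point:
  assumes k: "Suc k \<le> D" and g: "odd_sphere_map (Suc k) g"
  obtains h v where "odd_sphere_map (Suc k) h" "\<And>x. x \<in> sphere_upto (Suc k) \<Longrightarrow> g x + h x \<noteq> 0"
    "v \<in> sphere_upto (Suc k)" "v \<notin> h ` sphere_upto k"
proof -
  let ?S = "sphere_upto (Suc k)"
  have g1: "norm (g x) = 1" if "x \<in> ?S" for x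
    using g that by (auto simp: odd_sphere_map_def sphere_map_def sphere_upto_def)
  have "continuous_on ?S g" "g ` ?S \<subseteq> span_upto (Suc k)" "\<And>x. x \<in> ?S \<Longrightarrow> g (- x) = - g x"
    using g by (auto simp: odd_sphere_map_def sphere_map_def sphere_upto_def)
  then obtain q where q: "polynomial_function q" "\<And>x. q (- x) = - q x" "q ` ?S \<subseteq> span_upto (Suc k)"
    "\<And>x. x \<in> ?S \<Longrightarrow> norm (q x - g x) < 1/2"
    by (rule odd_polynomial_approximation[where e = "1/2"]) auto
  have q0: "q x \<noteq> 0" if "x \<in> ?S" for x
    using q(4)[OF that] g1[OF that] by auto
  define h where "h x = sgn (q x)" for x
  have "odd_sphere_map (Suc k) h"
    unfolding h_def using q q0 continuous_on_polymonial_function[OF q(1)]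
    by (intro odd_sphere_map_sgn) auto
  moreover have "g x + h x \<noteq> 0" if x: "x \<in> ?S" for x
  proof
    assume "g x + h x = 0"
    then have "q x - g x = (norm (q x) + 1) *\<^sub>R h x"
      using q0[OF x] by (simp add: h_def add_eq_0_iff2 sgn_div_norm algebra_simps)
    then have "norm (q x - g x) \<ge> 1"
      using q0[OF x] by (simp add: h_def norm_sgn)
    then show False using q(4)[OF x] by simp
  qed
  moreover have "h ` sphere_upto k \<noteq> ?S"
  proof -
    have "h differentiable_on sphere 0 1 \<inter> span_upto k"
      unfolding h_def using q(1) q0 sphere_upto_mono[of k "Suc k"]
      by (intro differentiable_on_sgn_polynomial_function) (auto simp: sphere_upto_def)
    then show ?thesis
      using spheremap_lemma1[of "span_upto k" "span_upto (Suc k)" h] k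
        span_upto_mono[of k "Suc k"] dim_span_upto[of k] dim_span_upto[of "Suc k"]
      by (simp add: sphere_upto_def)
  qed
  moreover have "h ` sphere_upto k \<subseteq> ?S"
    using calculation(1) sphere_upto_mono[of k "Suc k"] by (auto simp: odd_sphere_map_def sphere_map_def)
  ultimately show ?thesis using that by blast
qed

(* The b (Suc k)-component of h x is removed on the equator sphere_upto k and kept at the poles.
   It can only vanish entirely on the equator, where h avoids the poles by assumption. *)
lemma equator_deformation:
  assumes k: "Suc k \<le> D" and h: "odd_sphere_map (Suc k) h"
    and avoid: "\<And>x. x \<in> sphere_upto k \<Longrightarrow> h x \<noteq> b (Suc k) \<and> h x \<noteq> - b (Suc k)"
  obtains f where "odd_sphere_map (Suc k) f" "f ` sphere_upto k \<subseteq> sphere_upto k"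
    "\<And>x. x \<in> sphere_upto (Suc k) \<Longrightarrow> h x + f x \<noteq> 0"
proof -
  let ?S = "sphere_upto (Suc k)" and ?e = "b (Suc k)"
  define u where "u x = h x - ((1 - \<bar>x \<bullet> ?e\<bar>) * (h x \<bullet> ?e)) *\<^sub>R ?e" for x
  have e1: "norm ?e = 1" using norm_b[OF k] .
  have h1: "norm (h x) = 1" and hS: "h x \<in> span_upto (Suc k)" if "x \<in> ?S" for x
    using h that by (auto simp: odd_sphere_map_def sphere_map_def sphere_upto_def)
  have x1: "\<bar>x \<bullet> ?e\<bar> \<le> 1" if "x \<in> ?S" for x
    using Cauchy_Schwarz_ineq2[of x ?e] e1 that by (simp add: sphere_upto_def)
  have uS: "u x \<in> span_upto (Suc k)" if "x \<in> ?S" for x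
    unfolding u_def using hS[OF that] b_in_span_upto[of "Suc k" "Suc k"]
    by (intro subspace_diff subspace_scale) auto
  have equator: "x \<in> span_upto k" if "x \<in> span_upto (Suc k)" "x \<bullet> ?e = 0" for x
    using span_upto_SucI[OF k that] .
  have u0: "u x \<noteq> 0" if x: "x \<in> ?S" for x
  proof
    assume "u x = 0"
    then have "1 - \<bar>x \<bullet> ?e\<bar> = 1" "h x = ?e \<or> h x = - ?e"
      using shrunk_component_eq_0[of "h x" "1 - \<bar>x \<bullet> ?e\<bar>" ?e] h1[OF x] e1 by (auto simp: u_def)
    moreover have "x \<in> sphere_upto k"
      using x calculation(1) equator[of x] by (simp add: sphere_upto_def)
    ultimately show False using avoid by blast
  qed
  define f where "f x = sgn (u x)" for x
  have "continuous_on ?S u"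
    using h unfolding u_def odd_sphere_map_def sphere_map_def by (intro continuous_intros) auto
  then have "odd_sphere_map (Suc k) f"
    unfolding f_def using h u0 uS by (intro odd_sphere_map_sgn) (auto simp: odd_sphere_map_def u_def)
  moreover have "f x \<in> sphere_upto k" if x: "x \<in> sphere_upto k" for x
  proof -
    have xS: "x \<in> ?S" using x sphere_upto_mono[of k "Suc k"] by auto
    have "x \<bullet> ?e = 0"
      using x k span_upto_inner_b[of k x "Suc k"] by (simp add: sphere_upto_def)
    then have "u x \<bullet> ?e = 0"
      using e1 by (simp add: u_def inner_diff_left dot_square_norm)
    then show ?thesis
      using equator[OF uS[OF xS]] u0[OF xS] by (simp add: f_def sgn_in_sphere_upto)
  qed
  moreover have "h x + f x \<noteq> 0" if "x \<in> ?S" for x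
    using sgn_shrunk_component_nonantipodal[of "h x" ?e "1 - \<bar>x \<bullet> ?e\<bar>"] h1 e1 x1 that
    by (simp add: f_def u_def add.commute)
  ultimately show ?thesis using that by blast
qed

lemma deg2_Suc_parity:
  assumes k: "Suc k \<le> D" and f: "odd_sphere_map (Suc k) f" and equator: "f ` sphere_upto k \<subseteq> sphere_upto k"
  shows "even (deg2 (Suc k) f - deg2 k f)"
proof -
  have "even (deg2 (Suc k) f - Brouwer_degree2 (Suc k - Suc 0) (nsphere_map f))"
  proof (rule Borsuk_odd_mapping_degree_step)
    show "continuous_map (nsphere (Suc k)) (nsphere (Suc k)) (nsphere_map f)"
      using f k by (intro continuous_map_nsphere_map) (auto simp: odd_sphere_map_def)
  next
    fix z assume "z \<in> topspace (nsphere (Suc k))"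
    then have "of_coords z \<in> sphere_upto (Suc k)" by (rule of_coords_in_sphere_upto[OF k])
    then show "(nsphere_map f \<circ> (\<lambda>x i. - x i)) z = ((\<lambda>x i. - x i) \<circ> nsphere_map f) z"
      using f by (simp add: odd_sphere_map_def nsphere_map_def of_coords_minus coords_def fun_eq_iff)
  next
    show "nsphere_map f \<in> topspace (nsphere (Suc k - Suc 0)) \<rightarrow> topspace (nsphere (Suc k - Suc 0))"
    proof
      fix z assume "z \<in> topspace (nsphere (Suc k - Suc 0))"
      then have "f (of_coords z) \<in> sphere_upto k"
        using k equator of_coords_in_sphere_upto[of k z] by auto
      then show "nsphere_map f z \<in> topspace (nsphere (Suc k - Suc 0))"
        using k coords_in_nsphere[of k] by (simp add: nsphere_map_def)
    qed
  qed
  then show ?thesis by simp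
qed

lemma odd_sphere_map_restrict:
  assumes "j \<le> k" "odd_sphere_map k f" "f ` sphere_upto j \<subseteq> sphere_upto j"
  shows "odd_sphere_map j f"
  using assms sphere_upto_mono[OF assms(1)]
  by (auto simp: odd_sphere_map_def sphere_map_def intro: continuous_on_subset)

lemma sphere_map_reflect: "u \<in> span_upto k \<Longrightarrow> sphere_map k (reflect u)"
  by (auto simp: sphere_map_def sphere_upto_def continuous_on_reflect reflect_in_subspace)

lemma rotate_to_pole:
  assumes k: "Suc k \<le> D" and h: "odd_sphere_map (Suc k) h"
    and v: "v \<in> sphere_upto (Suc k)" "v \<notin> h ` sphere_upto k"
  obtains R where "sphere_map (Suc k) R" "odd (deg2 (Suc k) R)" "odd_sphere_map (Suc k) (R \<circ> h)"
    "\<And>x. x \<in> sphere_upto k \<Longrightarrow> (R \<circ> h) x \<noteq> b (Suc k) \<and> (R \<circ> h) x \<noteq> - b (Suc k)"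
proof -
  let ?e = "b (Suc k)"
  define R where "R = reflect (v - ?e)"
  have R: "sphere_map (Suc k) R"
    unfolding R_def using v(1) b_in_span_upto[of "Suc k" "Suc k"]
    by (intro sphere_map_reflect subspace_diff) (auto simp: sphere_upto_def)
  have RR: "R (R y) = y" for y by (simp add: R_def)
  have Re: "R ?e = v" "R (- ?e) = - v"
    using reflect_diff_eq[of v ?e] norm_b[OF k] v(1) reflect_reflect[of "v - ?e" v]
    by (simp_all add: R_def sphere_upto_def reflect_minus)
  have "(R \<circ> h) x \<noteq> ?e \<and> (R \<circ> h) x \<noteq> - ?e" if x: "x \<in> sphere_upto k" for x
  proof (intro conjI notI)
    assume "(R \<circ> h) x = ?e"
    then have "h x = v" using RR[of "h x"] Re by simp
    then show False using v(2) x by auto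
  next
    assume "(R \<circ> h) x = - ?e"
    then have "h x = - v" using RR[of "h x"] Re by simp
    moreover have "h (- x) = - h x"
      using h x sphere_upto_mono[of k "Suc k"] by (auto simp: odd_sphere_map_def)
    ultimately show False using v(2) sphere_upto_minus[OF x] by force
  qed
  moreover have "odd (deg2 (Suc k) R)"
    using R RR by (intro odd_deg2_involution[OF k])
  moreover have "odd_sphere_map (Suc k) (R \<circ> h)"
    using sphere_map_compose[OF R] h by (auto simp: odd_sphere_map_def R_def reflect_minus)
  ultimately show ?thesis using R that by blast
qed

theorem odd_deg2_odd_sphere_map: "k \<le> D \<Longrightarrow> odd_sphere_map k g \<Longrightarrow> odd (deg2 k g)"
proof (induction k arbitrary: g)
  case 0
  have "g (g x) = x" if "x \<in> sphere_upto 0" for x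
  proof -
    have "g (b 0) = b 0 \<or> g (b 0) = - b 0"
      using "0.prems"(2) b_in_sphere_upto[of 0] sphere_upto_0 by (auto simp: odd_sphere_map_def sphere_map_def)
    then show ?thesis
      using sphere_upto_0[OF that] "0.prems"(2) b_in_sphere_upto[of 0] by (auto simp: odd_sphere_map_def)
  qed
  then show ?case
    using "0.prems" by (intro odd_deg2_involution) (auto simp: odd_sphere_map_def)
next
  case (Suc k)
  have k: "Suc k \<le> D" by (rule Suc.prems(1))
  obtain h v where h: "odd_sphere_map (Suc k) h"
    and gh: "\<And>x. x \<in> sphere_upto (Suc k) \<Longrightarrow> g x + h x \<noteq> 0"
    and v: "v \<in> sphere_upto (Suc k)" "v \<notin> h ` sphere_upto k"
    using odd_approximation_missing_point[OF k Suc.prems(2)] by blast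
  obtain R where R: "sphere_map (Suc k) R" "odd (deg2 (Suc k) R)" "odd_sphere_map (Suc k) (R \<circ> h)"
    and avoid: "\<And>x. x \<in> sphere_upto k \<Longrightarrow> (R \<circ> h) x \<noteq> b (Suc k) \<and> (R \<circ> h) x \<noteq> - b (Suc k)"
    using rotate_to_pole[OF k h v] by blast
  obtain f where f: "odd_sphere_map (Suc k) f" "f ` sphere_upto k \<subseteq> sphere_upto k"
    and Rhf: "\<And>x. x \<in> sphere_upto (Suc k) \<Longrightarrow> (R \<circ> h) x + f x \<noteq> 0"
    using equator_deformation[OF k R(3) avoid] by blast
  have "odd (deg2 k f)"
    using Suc.IH k odd_sphere_map_restrict[OF _ f] by simp
  then have "odd (deg2 (Suc k) f)"
    using deg2_Suc_parity[OF k f] by simp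
  moreover have "deg2 (Suc k) (R \<circ> h) = deg2 (Suc k) f"
    using R(3) f(1) Rhf by (intro deg2_nonantipodal[OF k]) (auto simp: odd_sphere_map_def)
  moreover have "deg2 (Suc k) (R \<circ> h) = deg2 (Suc k) R * deg2 (Suc k) h"
    using deg2_compose[OF k R(1)] h by (simp add: odd_sphere_map_def)
  moreover have "deg2 (Suc k) g = deg2 (Suc k) h"
    using Suc.prems(2) h gh by (intro deg2_nonantipodal[OF k]) (auto simp: odd_sphere_map_def)
  ultimately show ?case
    using R(2) by (metis even_mult_iff)
qed

lemma deg2_eq_0_if_not_onto:
  assumes k: "k \<le> D" and g: "sphere_map k g" and y: "y \<in> sphere_upto k" "y \<notin> g ` sphere_upto k"
  shows "deg2 k g = 0"
proof (rule Brouwer_degree2_nonsurjective)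
  show "continuous_map (nsphere k) (nsphere k) (nsphere_map g)"
    by (rule continuous_map_nsphere_map[OF k g])
  have "coords y \<notin> nsphere_map g ` topspace (nsphere k)"
  proof
    assume "coords y \<in> nsphere_map g ` topspace (nsphere k)"
    then obtain z where z: "z \<in> topspace (nsphere k)" "coords y = coords (g (of_coords z))"
      by (auto simp: nsphere_map_def)
    have z': "of_coords z \<in> sphere_upto k"
      by (rule of_coords_in_sphere_upto[OF k z(1)])
    then have gz: "g (of_coords z) \<in> sphere_upto k"
      using g by (auto simp: sphere_map_def)
    have "y = of_coords (coords y)"
      using y(1) span_upto_mono[OF k] by (auto simp: of_coords_coords sphere_upto_def)
    also have "\<dots> = g (of_coords z)"
      using z(2) gz span_upto_mono[OF k] by (auto simp: of_coords_coords sphere_upto_def)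
    finally show False using y(2) z' by blast
  qed
  then show "nsphere_map g ` topspace (nsphere k) \<noteq> topspace (nsphere k)"
    using coords_in_nsphere[OF k y(1)] by blast
qed

lemma Borsuk_Ulam_sphere_upto:
  assumes "continuous_on (sphere_upto D) \<phi>" "\<And>x. x \<in> sphere_upto D \<Longrightarrow> \<phi> (- x) = - \<phi> x"
    and "\<And>x. x \<in> sphere_upto D \<Longrightarrow> \<phi> x \<in> span_upto D"
    and orth: "\<And>x. x \<in> sphere_upto D \<Longrightarrow> \<phi> x \<bullet> b D = 0"
  shows "\<exists>x\<in>sphere_upto D. \<phi> x = 0"
proof (rule ccontr)
  assume "\<not> ?thesis"
  then have nz: "\<And>x. x \<in> sphere_upto D \<Longrightarrow> \<phi> x \<noteq> 0" by blast
  define g where "g x = sgn (\<phi> x)" for x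
  have g: "odd_sphere_map D g"
    unfolding g_def using assms nz by (intro odd_sphere_map_sgn) auto
  have "b D \<notin> g ` sphere_upto D"
  proof
    assume "b D \<in> g ` sphere_upto D"
    then obtain x where x: "x \<in> sphere_upto D" and "b D = sgn (\<phi> x)" by (auto simp: g_def)
    then have "b D \<bullet> b D = sgn (\<phi> x) \<bullet> b D" by simp
    also have "\<dots> = 0" using orth[OF x] by (simp add: sgn_div_norm)
    finally show False using orthonormal[of D D] by simp
  qed
  then have "deg2 D g = 0"
    using g b_in_sphere_upto[of D] by (intro deg2_eq_0_if_not_onto) (auto simp: odd_sphere_map_def)
  then show False
    using odd_deg2_odd_sphere_map[OF order_refl g] by simp
qed

end

theorem Borsuk_Ulam:
  fixes F :: "'a::euclidean_space \<times> real \<Rightarrow> 'a"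
  assumes "continuous_on (sphere 0 1) F" "\<And>u. u \<in> sphere 0 1 \<Longrightarrow> F (- u) = - F u"
  shows "\<exists>u\<in>sphere 0 1. F u = 0"
proof -
  let ?d = "DIM('a)"
  obtain en where en: "bij_betw en {0..<?d} (Basis :: 'a set)"
    using ex_bij_betw_nat_finite[OF finite_Basis] by blast
  have en_Basis: "en i \<in> Basis" if "i < ?d" for i
    using en that by (auto dest: bij_betwE)
  have en_eq: "en i = en j \<longleftrightarrow> i = j" if "i < ?d" "j < ?d" for i j
    using en that by (auto simp: bij_betw_def inj_on_def)
  define b :: "nat \<Rightarrow> 'a \<times> real" where "b i = (if i < ?d then (en i, 0) else (0, 1))" for i
  interpret orthonormal_seq b ?d
  proof
    fix i j assume "i \<le> ?d" "j \<le> ?d"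
    then show "b i \<bullet> b j = (if i = j then 1 else 0)"
      by (auto simp: b_def inner_Pair inner_Basis en_Basis en_eq)
  qed
  have "span_upto ?d = UNIV"
    using dim_span_upto[of ?d] dim_eq_full[of "span_upto ?d"] by (simp add: span_upto_def span_span)
  then have S: "sphere_upto ?d = sphere 0 1"
    by (simp add: sphere_upto_def)
  have "\<exists>u\<in>sphere_upto ?d. (F u, 0::real) = 0"
  proof (rule Borsuk_Ulam_sphere_upto[of "\<lambda>u. (F u, 0)"])
    show "continuous_on (sphere_upto ?d) (\<lambda>u. (F u, 0))"
      unfolding S by (intro continuous_on_Pair assms(1) continuous_on_const)
  qed (use assms \<open>span_upto ?d = UNIV\<close> in \<open>auto simp: S b_def inner_Pair\<close>)
  then show ?thesis using S by (simp add: zero_prod_def)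
qed

section \<open>Halving hyperplanes\<close>

definition clip :: "real \<Rightarrow> real" where
  "clip t = max (-1) (min 1 t)"

lemma clip_minus: "clip (- t) = - clip t"
  by (simp add: clip_def)

lemma abs_clip_le: "\<bar>clip t\<bar> \<le> 1"
  by (simp add: clip_def)

lemma continuous_on_clip [continuous_intros]:
  "continuous_on S f \<Longrightarrow> continuous_on S (\<lambda>x. clip (f x))"
  unfolding clip_def by (intro continuous_intros)

lemma eventually_clip_divide_eq_sgn:
  fixes f g :: "'b \<Rightarrow> real"
  assumes f: "(f \<longlongrightarrow> t) F" and g: "(g \<longlongrightarrow> 0) F" "eventually (\<lambda>k. 0 < g k) F" and "t \<noteq> 0"
  shows "eventually (\<lambda>k. clip (f k / g k) = sgn t) F"
proof -
  have pos: "eventually (\<lambda>k. clip (f k / g k) = 1) F" if "(f \<longlongrightarrow> t) F" "0 < t" for f t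
  proof -
    have "eventually (\<lambda>k. t/2 < f k \<and> g k < t/2 \<and> 0 < g k) F"
      using order_tendstoD(1)[OF that(1), of "t/2"] order_tendstoD(2)[OF g(1), of "t/2"] g(2) that(2)
      by (auto intro: eventually_conj)
    then show ?thesis
      by (rule eventually_mono) (simp add: clip_def field_simps)
  qed
  show ?thesis
  proof (cases "0 < t")
    case False
    then have "eventually (\<lambda>k. clip (- f k / g k) = 1) F"
      using pos[OF tendsto_minus[OF f]] \<open>t \<noteq> 0\<close> by simp
    then show ?thesis
      by (rule eventually_mono) (use False \<open>t \<noteq> 0\<close> in \<open>simp add: clip_minus sgn_if\<close>)
  qed (use pos[OF f] in simp)
qed

lemma exists_zero_sum_clipped_cut:
  fixes U :: "'n::finite \<Rightarrow> (real ^ 'n) set"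
  assumes "0 < e"
  shows "\<exists>u\<in>sphere 0 1. \<forall>i. (\<Sum>x\<in>U i. clip ((fst u \<bullet> x - snd u) / e)) = 0"
proof -
  define F where "F u = (\<chi> i. \<Sum>x\<in>U i. clip ((fst u \<bullet> x - snd u) / e))" for u :: "(real ^ 'n) \<times> real"
  have "\<exists>u\<in>sphere 0 1. F u = 0"
  proof (rule Borsuk_Ulam)
    show "continuous_on (sphere 0 1) F"
      unfolding F_def using assms by (intro continuous_on_vec_lambda continuous_on_sum continuous_intros) auto
    have clip_swap: "clip ((snd u - fst u \<bullet> x) / e) = - clip ((fst u \<bullet> x - snd u) / e)" for u x
      using clip_minus[of "(fst u \<bullet> x - snd u) / e"] by (simp add: minus_divide_left)
    show "F (- u) = - F u" for u
      by (simp add: F_def vec_eq_iff sum_negf clip_swap)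
  qed
  then show ?thesis by (auto simp: F_def vec_eq_iff)
qed

lemma exists_balanced_cut:
  fixes U :: "'n::finite \<Rightarrow> (real ^ 'n) set"
  assumes "finite (\<Union>i. U i)"
  obtains a b and \<phi> :: "real ^ 'n \<Rightarrow> real" where "norm (a, b) = 1" "\<And>x. \<bar>\<phi> x\<bar> \<le> 1"
    "\<And>i. (\<Sum>x\<in>U i. \<phi> x) = 0" "\<And>x. x \<in> (\<Union>i. U i) \<Longrightarrow> a \<bullet> x \<noteq> b \<Longrightarrow> \<phi> x = sgn (a \<bullet> x - b)"
proof -
  define val where "val u x = fst u \<bullet> x - snd u" for u :: "(real ^ 'n) \<times> real" and x
  have "\<forall>k. \<exists>u\<in>sphere 0 1. \<forall>i. (\<Sum>x\<in>U i. clip (val u x / inverse (Suc k))) = 0"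
  proof
    fix k
    show "\<exists>u\<in>sphere 0 1. \<forall>i. (\<Sum>x\<in>U i. clip (val u x / inverse (Suc k))) = 0"
      using exists_zero_sum_clipped_cut[of "inverse (Suc k)" U] unfolding val_def by simp
  qed
  then obtain us where us: "\<And>k. us k \<in> sphere 0 1"
    "\<And>k i. (\<Sum>x\<in>U i. clip (val (us k) x / inverse (Suc k))) = 0"
    by metis
  obtain l r where l: "l \<in> sphere 0 1" and r: "strict_mono r" and lim: "(us \<circ> r) \<longlonglongrightarrow> l"
    using compact_imp_seq_compact[OF compact_sphere, of 0 1] us(1) unfolding seq_compact_def by metis
  have "eventually (\<lambda>k. \<forall>x\<in>(\<Union>i. U i). val l x \<noteq> 0 \<longrightarrow>
      clip (val (us (r k)) x / inverse (Suc (r k))) = sgn (val l x)) sequentially"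
  proof (intro eventually_ball_finite[OF assms] ballI)
    fix x
    have "(\<lambda>k. val (us (r k)) x) \<longlonglongrightarrow> val l x"
      using lim unfolding val_def o_def by (intro tendsto_intros)
    moreover have "(\<lambda>k. inverse (real (Suc (r k)))) \<longlonglongrightarrow> 0"
      using LIMSEQ_subseq_LIMSEQ[OF LIMSEQ_inverse_real_of_nat r] by (simp add: o_def)
    ultimately show "eventually (\<lambda>k. val l x \<noteq> 0 \<longrightarrow>
        clip (val (us (r k)) x / inverse (Suc (r k))) = sgn (val l x)) sequentially"
      by (cases "val l x = 0") (auto intro: eventually_clip_divide_eq_sgn)
  qed
  then obtain K where K: "\<And>x. x \<in> (\<Union>i. U i) \<Longrightarrow> val l x \<noteq> 0 \<Longrightarrow>
      clip (val (us (r K)) x / inverse (Suc (r K))) = sgn (val l x)"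
    unfolding eventually_sequentially by blast
  show ?thesis
  proof (rule that)
    show "norm (fst l, snd l) = 1" using l by simp
    show "\<bar>clip (val (us (r K)) x / inverse (Suc (r K)))\<bar> \<le> 1" for x
      by (rule abs_clip_le)
    show "(\<Sum>x\<in>U i. clip (val (us (r K)) x / inverse (Suc (r K)))) = 0" for i
      by (rule us(2))
  qed (use K in \<open>auto simp: val_def\<close>)
qed

lemma sum_over_cut:
  fixes a :: "'a::real_inner"
  assumes "finite U" and \<phi>: "\<And>x. x \<in> U \<Longrightarrow> a \<bullet> x \<noteq> b \<Longrightarrow> \<phi> x = sgn (a \<bullet> x - b)"
  shows "(\<Sum>x\<in>U. \<phi> x) = real (card {x \<in> U. a \<bullet> x > b}) - real (card {x \<in> U. a \<bullet> x < b})
           + (\<Sum>x\<in>{x \<in> U. a \<bullet> x = b}. \<phi> x)"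
    and "card U = card {x \<in> U. a \<bullet> x > b} + card {x \<in> U. a \<bullet> x < b} + card {x \<in> U. a \<bullet> x = b}"
proof -
  let ?P = "{x \<in> U. a \<bullet> x > b}" and ?N = "{x \<in> U. a \<bullet> x < b}" and ?Z = "{x \<in> U. a \<bullet> x = b}"
  have U: "U = (?P \<union> ?N) \<union> ?Z" by auto
  have fin: "finite ?P" "finite ?N" "finite ?Z" using \<open>finite U\<close> by auto
  have disj: "(?P \<union> ?N) \<inter> ?Z = {}" "?P \<inter> ?N = {}" by auto
  have "sum \<phi> U = sum \<phi> ?P + sum \<phi> ?N + sum \<phi> ?Z"
    using sum.union_disjoint[of "?P \<union> ?N" ?Z \<phi>] sum.union_disjoint[of ?P ?N \<phi>] fin disj
    by (simp flip: U)
  moreover have "sum \<phi> ?P = sum (\<lambda>_. 1) ?P" "sum \<phi> ?N = sum (\<lambda>_. -1) ?N"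
    using \<phi> by (auto intro!: sum.cong)
  ultimately show "(\<Sum>x\<in>U. \<phi> x) = real (card ?P) - real (card ?N) + (\<Sum>x\<in>?Z. \<phi> x)"
    by simp
  show "card U = card ?P + card ?N + card ?Z"
    using card_Un_disjoint[of "?P \<union> ?N" ?Z] card_Un_disjoint[of ?P ?N] fin disj
    by (simp flip: U)
qed

lemma odd_set_meets_cut:
  fixes a :: "'a::real_inner"
  assumes "finite U" "odd (card U)" "(\<Sum>x\<in>U. \<phi> x) = 0"
    and "\<And>x. x \<in> U \<Longrightarrow> a \<bullet> x \<noteq> b \<Longrightarrow> \<phi> x = sgn (a \<bullet> x - b)"
  shows "{x \<in> U. a \<bullet> x = b} \<noteq> {}"
proof
  assume Z: "{x \<in> U. a \<bullet> x = b} = {}"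
  have "real (card {x \<in> U. a \<bullet> x > b}) = real (card {x \<in> U. a \<bullet> x < b})"
    and "card U = card {x \<in> U. a \<bullet> x > b} + card {x \<in> U. a \<bullet> x < b}"
    using sum_over_cut[OF assms(1,4)] assms(3) unfolding Z by simp_all
  then show False using assms(2) by simp
qed

lemma cut_through_one_point_halves:
  fixes a :: "'a::real_inner"
  assumes "finite U" "odd (card U)" "(\<Sum>x\<in>U. \<phi> x) = 0" "\<And>x. \<bar>\<phi> x\<bar> \<le> 1"
    and "\<And>x. x \<in> U \<Longrightarrow> a \<bullet> x \<noteq> b \<Longrightarrow> \<phi> x = sgn (a \<bullet> x - b)"
    and "{x \<in> U. a \<bullet> x = b} = {p}"
  shows "card {x \<in> U. a \<bullet> x < b} = (card U - 1) div 2 \<and> card {x \<in> U. a \<bullet> x > b} = (card U - 1) div 2"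
proof -
  let ?P = "card {x \<in> U. a \<bullet> x > b}" and ?N = "card {x \<in> U. a \<bullet> x < b}"
  have "real ?P - real ?N = - \<phi> p" and U: "card U = ?P + ?N + 1"
    using sum_over_cut[of U a b \<phi>] assms by simp_all
  then have "?P \<le> ?N + 1" "?N \<le> ?P + 1"
    using assms(4)[of p] by linarith+
  moreover have "even (?P + ?N)" using U assms(2) by simp
  ultimately have "?P = ?N" by presburger
  then show ?thesis using U by simp
qed

lemma card_on_hyperplane_le:
  fixes A :: "(real ^ 'n) set"
  assumes "general_position A" "a \<noteq> 0"
  shows "card {x \<in> A. a \<bullet> x = b} \<le> CARD('n)"
proof (rule ccontr)
  assume "\<not> ?thesis"
  then have "CARD('n) + 1 \<le> card {x \<in> A. a \<bullet> x = b}" by simp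
  then obtain T where T: "T \<subseteq> {x \<in> A. a \<bullet> x = b}" "card T = CARD('n) + 1"
    by (rule obtain_subset_with_card_n)
  then have "\<not> affine_dependent T"
    using assms(1) by (auto simp: general_position_def)
  then have "aff_dim T = int CARD('n)"
    using aff_dim_affine_independent[of T] T(2) by simp
  moreover have "aff_dim T \<le> aff_dim {x. a \<bullet> x = b}"
    using T(1) by (intro aff_dim_subset) auto
  ultimately show False
    using aff_dim_hyperplane[OF assms(2), of b] by simp
qed

lemma affine_hull_eq_hyperplane:
  fixes P :: "(real ^ 'n) set"
  assumes "a \<noteq> 0" "P \<subseteq> {x. a \<bullet> x = b}" "\<not> affine_dependent P" "card P = CARD('n)"
  shows "affine hull P = {x. a \<bullet> x = b}"
proof (rule affine_dim_equal)
  have "P \<noteq> {}" using assms(4) by auto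
  then show "affine hull P \<noteq> {}" by simp
  show "affine hull P \<subseteq> {x. a \<bullet> x = b}"
    using assms(2) affine_hyperplane by (intro hull_minimal) auto
  show "aff_dim (affine hull P) = aff_dim {x. a \<bullet> x = b}"
    using aff_dim_affine_independent[OF assms(3)] assms(4) aff_dim_hyperplane[OF assms(1), of b]
    by simp
qed (simp_all add: affine_hyperplane)

lemma card_eq_1_if_sum_card_le_card:
  fixes Z :: "'i::finite \<Rightarrow> 'a set"
  assumes "\<And>i. finite (Z i)" "\<And>i. Z i \<noteq> {}" "(\<Sum>i\<in>UNIV. card (Z i)) \<le> CARD('i)"
  shows "card (Z i) = 1"
proof (rule ccontr)
  assume "card (Z i) \<noteq> 1"
  have ge1: "1 \<le> card (Z j)" for j
    using assms(1,2)[of j] by (simp add: Suc_le_eq card_gt_0_iff)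
  then have "1 < card (Z i)" using \<open>card (Z i) \<noteq> 1\<close> by (simp add: le_neq_implies_less)
  then have "(\<Sum>j\<in>(UNIV :: 'i set). 1) < (\<Sum>j\<in>UNIV. card (Z j))"
    using sum_strict_mono_ex1[of UNIV "\<lambda>_. 1" "\<lambda>j. card (Z j)"] ge1 by auto
  then show False using assms(3) by simp
qed

lemma cut_meets_each_set_once:
  fixes U :: "'n::finite \<Rightarrow> (real ^ 'n) set"
  assumes fin: "\<And>i. finite (U i)" and disj: "\<And>i j. i \<noteq> j \<Longrightarrow> U i \<inter> U j = {}"
    and gp: "general_position (\<Union>i. U i)" and "a \<noteq> 0" and meets: "\<And>i. {x \<in> U i. a \<bullet> x = b} \<noteq> {}"
  obtains p where "\<And>i. {x \<in> U i. a \<bullet> x = b} = {p i}"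
proof -
  define Z where "Z i = {x \<in> U i. a \<bullet> x = b}" for i
  have finU: "finite (\<Union>i. U i)" using fin by simp
  have "(\<Sum>i\<in>UNIV. card (Z i)) = card (\<Union>i. Z i)"
    using fin disj by (intro card_UN_disjoint[symmetric]) (auto simp: Z_def)
  also have "\<dots> \<le> card {x \<in> (\<Union>i. U i). a \<bullet> x = b}"
    by (rule card_mono[OF finite_subset[OF _ finU]]) (auto simp: Z_def)
  also have "\<dots> \<le> CARD('n)"
    by (rule card_on_hyperplane_le[OF gp \<open>a \<noteq> 0\<close>])
  finally have "card (Z i) = 1" for i
    using fin meets by (intro card_eq_1_if_sum_card_le_card) (auto simp: Z_def)
  then have "\<forall>i. \<exists>x. Z i = {x}"
    by (metis card_1_singletonE)
  then show ?thesis
    using that unfolding Z_def by metis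
qed

lemma affine_hull_transversal:
  fixes U :: "'n::finite \<Rightarrow> (real ^ 'n) set"
  assumes disj: "\<And>i j. i \<noteq> j \<Longrightarrow> U i \<inter> U j = {}" and gp: "general_position (\<Union>i. U i)"
    and "a \<noteq> 0" and p: "\<And>i. p i \<in> U i" "\<And>i. a \<bullet> p i = b"
  shows "affine hull (range p) = {x. a \<bullet> x = b}"
proof -
  have "inj p"
  proof (rule injI)
    fix i j assume "p i = p j"
    then show "i = j" using p(1)[of i] p(1)[of j] disj[of i j] by auto
  qed
  then have card_p: "card (range p) = CARD('n)"
    by (simp add: card_image)
  have "range p \<subseteq> (\<Union>i. U i) \<and> card (range p) \<le> CARD('n) + 1 \<longrightarrow> \<not> affine_dependent (range p)"
    using gp unfolding general_position_def by (rule spec)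
  then have "\<not> affine_dependent (range p)"
    using p(1) card_p by auto
  then show ?thesis
    using p(2) card_p by (intro affine_hull_eq_hyperplane[OF \<open>a \<noteq> 0\<close>]) auto
qed

theorem mainTheorem3:
  fixes U :: "'n::finite \<Rightarrow> (real ^ 'n) set"
  assumes fin: "\<And>i. finite (U i)"
    and odd: "\<And>i. odd (card (U i))"
    and disj: "\<And>i j. i \<noteq> j \<Longrightarrow> U i \<inter> U j = {}"
    and gp: "general_position (\<Union>i. U i)"
  shows "\<exists>p :: 'n \<Rightarrow> real ^ 'n. (\<forall>i. p i \<in> U i) \<and>
           (\<exists>a b. a \<noteq> 0 \<and> affine hull (range p) = {x. a \<bullet> x = b} \<and>
              (\<forall>i. card {x \<in> U i. a \<bullet> x < b} = (card (U i) - 1) div 2 \<and>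
                   card {x \<in> U i. a \<bullet> x > b} = (card (U i) - 1) div 2))"
proof -
  obtain a b and \<phi> :: "real ^ 'n \<Rightarrow> real" where ab: "norm (a, b) = 1" and \<phi>: "\<And>x. \<bar>\<phi> x\<bar> \<le> 1"
    "\<And>i. (\<Sum>x\<in>U i. \<phi> x) = 0" "\<And>x. x \<in> (\<Union>i. U i) \<Longrightarrow> a \<bullet> x \<noteq> b \<Longrightarrow> \<phi> x = sgn (a \<bullet> x - b)"
    using exists_balanced_cut[of U] fin by auto
  have meets: "{x \<in> U i. a \<bullet> x = b} \<noteq> {}" for i
    using fin odd \<phi>(2) by (intro odd_set_meets_cut[where \<phi> = \<phi>]) (auto intro!: \<phi>(3))
  have "a \<noteq> 0"
  proof
    assume "a = 0"
    then have "b \<noteq> 0" using ab by auto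
    then show False using meets \<open>a = 0\<close> by simp
  qed
  then obtain p where p: "\<And>i. {x \<in> U i. a \<bullet> x = b} = {p i}"
    using cut_meets_each_set_once[OF fin disj gp _ meets] by blast
  then have pU: "p i \<in> U i" and pH: "a \<bullet> p i = b" for i
    by (auto simp: set_eq_iff)
  have "card {x \<in> U i. a \<bullet> x < b} = (card (U i) - 1) div 2 \<and>
      card {x \<in> U i. a \<bullet> x > b} = (card (U i) - 1) div 2" for i
    using fin odd \<phi>(1,2) p[of i]
    by (intro cut_through_one_point_halves[where \<phi> = \<phi>]) (auto intro!: \<phi>(3))
  then show ?thesis
    using pU \<open>a \<noteq> 0\<close> affine_hull_transversal[OF disj gp \<open>a \<noteq> 0\<close> pU pH]
    by (intro exI[of _ p] exI[of _ a] exI[of _ b] conjI allI) simp_all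
qed

end
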